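(* Let $Y$ be the Springer fibre, i.e. the variety of full flags $F_1\subset F_2\subset\dots\subset F_n=V$ ($\dim F_i=i$) with $NF_i\subset F_{i-1}$ for all $i$ (where $F_0=\{0\}$). (a) Let $I\subset\{1,\dots,n-1\}$, write $\{1,\dots,n\}\setminus I=\{j_1<\dots<j_r\}$ (so $j_r=n$), and let $U\subset Y$ be a subspace of type $I$. Then $N F_{j_l}\subset F_{j_{l-1}}$ for all $l=1,\dots,r$ (with $F_{j_0}:=\{0\}$) and every flag $(F_1\subset\dots\subset F_n)\in U$. (b) If $U\subset Y$ is a subspace of type $I$, then $I$ contains no two consecutive integers.
   Context: Fix integers $n\ge 2k\ge 0$. Let $V$ be an $n$-dimensional complex vector space with ordered basis $e_1,\dots,e_{n-k},f_1,\dots,f_k$ and $N:V\to V$ the nilpotent endomorphism with $Ne_i=e_{i-1}$, $Nf_i=f_{i-1}$, $e_0=f_0=0$ (Jordan type $(n-k,k)$). For $I\subset\{1,\dots,n-1\}$, a subspace of type $I$ is a set of full flags in $V$ of the form $\{(F_1\subset\dots\subset F_n): \dim F_i=i,\ F_j=G_j \text{ for all } j\in\{1,\dots,n\}\setminus I\}$ for some fixed subspaces $G_j$ (i.e. the $F_j$ with $j\notin I$ are fixed and those with $j\in I$ range over all possibilities). *)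

theory Defs
  imports "HOL-Analysis.Analysis" "HOL-Library.Function_Algebras"
begin

text \<open>The ambient space V is C^n, realised as the coordinate functions
  nat => complex supported on {0..<n}. Coordinate index i-1 corresponds to the
  basis vector e_i (1 <= i <= n-k), coordinate index n-k+i-1 to f_i (1 <= i <= k).\<close>

type_synonym vect = "nat \<Rightarrow> complex"

definition cscale :: "complex \<Rightarrow> vect \<Rightarrow> vect" where
  "cscale c v = (\<lambda>i. c * v i)"

definition ambient :: "nat \<Rightarrow> vect set" where
  "ambient n = {v. \<forall>i\<ge>n. v i = 0}"

text \<open>The nilpotent N: N e_i = e_{i-1}, N f_i = f_{i-1}, e_0 = f_0 = 0.\<close>
definition nilN :: "nat \<Rightarrow> nat \<Rightarrow> vect \<Rightarrow> vect" where
  "nilN n k v = (\<lambda>j. if j + 1 < n - k then v (j + 1)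
                     else if n - k \<le> j \<and> j + 1 < n then v (j + 1)
                     else 0)"

definition subsp_dim :: "nat \<Rightarrow> vect set \<Rightarrow> nat \<Rightarrow> bool" where
  "subsp_dim n S d \<longleftrightarrow> module.subspace cscale S \<and> S \<subseteq> ambient n
                         \<and> vector_space.dim cscale S = d"

text \<open>A full flag F_1 \<subseteq> ... \<subseteq> F_n = V, represented as a function on indices;
  normalised by F 0 = {0} and F j = V for j > n, so that flags correspond
  bijectively to such functions.\<close>
definition full_flag :: "nat \<Rightarrow> (nat \<Rightarrow> vect set) \<Rightarrow> bool" where
  "full_flag n F \<longleftrightarrow> (\<forall>i\<in>{1..n}. subsp_dim n (F i) i)
     \<and> (\<forall>i\<in>{1..<n}. F i \<subseteq> F (Suc i))
     \<and> F 0 = {0} \<and> (\<forall>j>n. F j = ambient n)"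

definition springer_fibre :: "nat \<Rightarrow> nat \<Rightarrow> (nat \<Rightarrow> vect set) set" where
  "springer_fibre n k = {F. full_flag n F \<and> (\<forall>i\<in>{1..n}. nilN n k ` F i \<subseteq> F (i - 1))}"

text \<open>A subspace of type I: the flags with F_j = G_j for j \<notin> I fixed
  (taken nonempty, i.e. the G_j form a partial flag).\<close>
definition subspace_of_type :: "nat \<Rightarrow> nat set \<Rightarrow> (nat \<Rightarrow> vect set) set \<Rightarrow> bool" where
  "subspace_of_type n I U \<longleftrightarrow>
     (\<exists>G. U \<noteq> {} \<and> U = {F. full_flag n F \<and> (\<forall>j\<in>{1..n} - I. F j = G j)})"

end

theory Submission
  imports Defs
begin

text \<open>Suppose all steps F_{a+1}, ..., F_{b-1} of a flag F may be chosen freely inside U.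
  Then N F_b \<subseteq> F_a: a vector v of N F_b outside F_a can be avoided by re-choosing these
  steps one after the other, each as a hyperplane of the next step through the previous one
  that misses v; the resulting flag lies in U but violates N F_b \<subseteq> F_{b-1}. Taking for a
  the previous index outside I gives (a). For (b), two consecutive indices i, i+1 in I
  would give N F_{i+2} \<subseteq> F_{i-1}, a loss of three dimensions, whereas the kernel of N,
  spanned by e_1 and f_1, is only two-dimensional.\<close>

context vector_space
begin

lemma dim_subset_of_span_finite:
  assumes "S \<subseteq> T" "T \<subseteq> span D" "finite D"
  shows "dim S \<le> dim T"
proof -
  obtain B where B: "B \<subseteq> T" "independent B" "T \<subseteq> span B" "card B = dim T"
    by (rule basis_exists)
  have "finite B"
    using independent_span_bound[OF assms(3) B(2)] B(1) assms(2) by blast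
  then show ?thesis
    using dim_le_card[of S B] assms(1) B by auto
qed

lemma exists_hyperplane_avoiding:
  assumes A: "subspace A" and B: "subspace B" and "A \<subseteq> B" "v \<in> B" "v \<notin> A"
    and D: "B \<subseteq> span D" "finite D"
  shows "\<exists>W. subspace W \<and> A \<subseteq> W \<and> W \<subseteq> B \<and> v \<notin> W \<and> dim W + 1 = dim B"
proof -
  obtain BA where BA: "BA \<subseteq> A" "independent BA" "A \<subseteq> span BA"
    by (rule maximal_independent_subset)
  have v_BA: "v \<notin> span BA"
    using span_minimal[OF BA(1) A] \<open>v \<notin> A\<close> by blast
  have "insert v BA \<subseteq> B"
    using BA(1) \<open>A \<subseteq> B\<close> \<open>v \<in> B\<close> by blast
  moreover have "independent (insert v BA)"
    using independent_insertI[OF v_BA BA(2)] .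
  ultimately obtain C where C: "insert v BA \<subseteq> C" "C \<subseteq> B" "independent C" "B \<subseteq> span C"
    by (rule maximal_independent_subset_extend)
  have "finite C"
    using independent_span_bound[OF D(2) C(3)] C(2) D(1) by blast
  define W where "W = span (C - {v})"
  have indep: "independent (C - {v})"
    using C(3) independent_mono by blast
  have "A \<subseteq> W"
  proof -
    have "BA \<subseteq> C - {v}" using C(1) v_BA span_base[of v BA] by blast
    then show ?thesis using BA(3) span_mono unfolding W_def by blast
  qed
  moreover have "W \<subseteq> B"
    unfolding W_def using C(2) by (intro span_minimal[OF _ B]) blast
  moreover have "v \<notin> W"
    using C(1,3) unfolding W_def dependent_def by blast
  moreover have "dim W + 1 = dim B"
    using dim_span_eq_card_independent[OF indep] basis_card_eq_dim[OF C(2,4,3)]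
      card_Suc_Diff1[OF \<open>finite C\<close>] C(1) unfolding W_def by auto
  ultimately show ?thesis
    using subspace_span W_def by blast
qed

lemma dim_le_dim_image_add_card:
  assumes f: "Vector_Spaces.linear scale scale f" and S: "subspace S"
    and E: "f ` S \<subseteq> span E" "finite E"
    and K: "finite K" "\<And>x. x \<in> S \<Longrightarrow> f x = 0 \<Longrightarrow> x \<in> span K"
  shows "dim S \<le> dim (f ` S) + card K"
proof -
  have hom: "module_hom scale scale f"
    using f by (simp add: module_hom_iff_linear)
  obtain BY where BY: "BY \<subseteq> f ` S" "independent BY" "f ` S \<subseteq> span BY" "card BY = dim (f ` S)"
    by (rule basis_exists)
  have "finite BY"
    using independent_span_bound[OF E(2) BY(2)] BY(1) E(1) by blast
  have "\<forall>y\<in>BY. \<exists>x. x \<in> S \<and> f x = y"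
    using BY(1) by blast
  then obtain g where g: "\<And>y. y \<in> BY \<Longrightarrow> g y \<in> S \<and> f (g y) = y"
    by metis
  have span_gBY: "span (g ` BY) \<subseteq> S"
    using g S by (intro span_minimal) auto
  have "S \<subseteq> span (K \<union> g ` BY)"
  proof
    fix x assume x: "x \<in> S"
    have "f ` g ` BY = BY"
      using g by force
    then have "f x \<in> f ` span (g ` BY)"
      using x BY(3) module_hom.span_image[OF hom, of "g ` BY"] by auto
    then obtain z where z: "z \<in> span (g ` BY)" "f z = f x"
      by auto
    have "x - z \<in> span K"
      using K(2)[of "x - z"] x z span_gBY S module_hom.diff[OF hom] by (auto intro: subspace_diff)
    moreover have "span K \<subseteq> span (K \<union> g ` BY)" "span (g ` BY) \<subseteq> span (K \<union> g ` BY)"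
      by (intro span_mono; blast)+
    ultimately have "(x - z) + z \<in> span (K \<union> g ` BY)"
      using z(1) by (blast intro: span_add)
    then show "x \<in> span (K \<union> g ` BY)"
      by simp
  qed
  then have "dim S \<le> card (K \<union> g ` BY)"
    using dim_le_card K(1) \<open>finite BY\<close> by blast
  also have "\<dots> \<le> card K + card BY"
    using card_Un_le card_image_le[OF \<open>finite BY\<close>] by (metis add_left_mono order_trans)
  finally show ?thesis
    using BY(4) by simp
qed

end

interpretation cs: vector_space cscale
  by unfold_locales (auto simp: cscale_def fun_eq_iff algebra_simps)

definition unit_vec :: "nat \<Rightarrow> vect" where
  "unit_vec i = (\<lambda>j. if j = i then 1 else 0)"

lemma sum_fun_apply: "(sum f A) x = (\<Sum>a\<in>A. f a x)"
  by (induction A rule: infinite_finite_induct) auto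

lemma ambient_subset_span_unit_vec: "ambient n \<subseteq> cs.span (unit_vec ` {..<n})"
proof
  fix v assume v: "v \<in> ambient n"
  have "v = (\<Sum>i<n. cscale (v i) (unit_vec i))"
  proof
    fix x
    have "(\<Sum>i<n. cscale (v i) (unit_vec i)) x = (\<Sum>i<n. if x = i then v i else 0)"
      unfolding sum_fun_apply by (rule sum.cong) (auto simp: cscale_def unit_vec_def)
    also have "\<dots> = v x"
      using v by (cases "x < n") (auto simp: ambient_def)
    finally show "v x = (\<Sum>i<n. cscale (v i) (unit_vec i)) x" by simp
  qed
  also have "\<dots> \<in> cs.span (unit_vec ` {..<n})"
    by (intro cs.span_sum cs.span_scale cs.span_base) auto
  finally show "v \<in> cs.span (unit_vec ` {..<n})" .
qed

lemma linear_nilN: "Vector_Spaces.linear cscale cscale (nilN n k)"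
  by unfold_locales (auto simp: nilN_def cscale_def fun_eq_iff algebra_simps)

lemma nilN_in_ambient: "nilN n k v \<in> ambient n"
  by (auto simp: nilN_def ambient_def)

lemma nilN_kernel_subset_span:
  assumes "k < n" "v \<in> ambient n" "nilN n k v = 0"
  shows "v \<in> cs.span {unit_vec 0, unit_vec (n - k)}"
proof -
  have "v j = 0" if "j \<noteq> 0" "j \<noteq> n - k" for j
  proof (cases "j < n")
    case True
    have "nilN n k v (j - 1) = 0" using assms(3) by simp
    then show ?thesis using that True by (auto simp: nilN_def split: if_splits)
  qed (use assms(2) in \<open>auto simp: ambient_def\<close>)
  then have "v = cscale (v 0) (unit_vec 0) + cscale (v (n - k)) (unit_vec (n - k))"
    using assms(1) by (auto simp: cscale_def unit_vec_def fun_eq_iff)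
  also have "\<dots> \<in> cs.span {unit_vec 0, unit_vec (n - k)}"
    by (intro cs.span_add cs.span_scale cs.span_base) auto
  finally show ?thesis .
qed

lemma dim_le_dim_nilN_image_add_2:
  assumes "cs.subspace S" "S \<subseteq> ambient n" "k < n"
  shows "cs.dim S \<le> cs.dim (nilN n k ` S) + 2"
proof -
  have "cs.dim S \<le> cs.dim (nilN n k ` S) + card {unit_vec 0, unit_vec (n - k)}"
  proof (rule cs.dim_le_dim_image_add_card[OF linear_nilN assms(1)])
    show "nilN n k ` S \<subseteq> cs.span (unit_vec ` {..<n})"
      using nilN_in_ambient ambient_subset_span_unit_vec by blast
    show "x \<in> cs.span {unit_vec 0, unit_vec (n - k)}" if "x \<in> S" "nilN n k x = 0" for x
      using nilN_kernel_subset_span assms that by blast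
  qed auto
  also have "card {unit_vec 0, unit_vec (n - k)} \<le> 2"
    by (simp add: card_insert_if)
  finally show ?thesis by simp
qed

lemma full_flagD:
  assumes "full_flag n F" "i \<le> n"
  shows "cs.subspace (F i)" "F i \<subseteq> ambient n" "cs.dim (F i) = i"
proof -
  have "cs.subspace (F i) \<and> F i \<subseteq> ambient n \<and> cs.dim (F i) = i"
  proof (cases "i = 0")
    case True
    then show ?thesis
      using assms(1) cs.subspace_single_0 cs.dim_eq_card_independent[OF cs.independent_empty]
        cs.dim_span[of "{}"] cs.span_empty
      by (auto simp: full_flag_def ambient_def zero_fun_def)
  next
    case False
    then show ?thesis
      using assms by (auto simp: full_flag_def subsp_dim_def)
  qed
  then show "cs.subspace (F i)" "F i \<subseteq> ambient n" "cs.dim (F i) = i"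
    by auto
qed

lemma full_flag_mono:
  assumes "full_flag n F" "a \<le> b" "b \<le> n"
  shows "F a \<subseteq> F b"
  using assms(2,3)
proof (induction b rule: dec_induct)
  case (step m)
  have "F m \<subseteq> F (Suc m)"
  proof (cases "m = 0")
    case True
    then show ?thesis
      using assms(1) cs.subspace_0[OF full_flagD(1)[OF assms(1), of 1]] step
      by (auto simp: full_flag_def)
  next
    case False
    then show ?thesis
      using assms(1) step by (auto simp: full_flag_def)
  qed
  then show ?case
    using step by auto
qed simp

lemma full_flag_fun_upd:
  assumes F: "full_flag n F" and m: "1 \<le> m" "m < n" and W: "subsp_dim n W m"
    and "F (m - 1) \<subseteq> W" "W \<subseteq> F (Suc m)"
  shows "full_flag n (F(m := W))"
  unfolding full_flag_def
proof (intro conjI ballI allI impI)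
  fix i assume "i \<in> {1..n}"
  then show "subsp_dim n ((F(m := W)) i) i"
    using F W by (auto simp: full_flag_def)
next
  fix i assume "i \<in> {1..<n}"
  then show "(F(m := W)) i \<subseteq> (F(m := W)) (Suc i)"
    using F assms(5,6) by (cases "i = m"; cases "Suc i = m") (auto simp: full_flag_def)
qed (use F m in \<open>auto simp: full_flag_def\<close>)

lemma full_flag_avoid_at:
  assumes F: "full_flag n F" and m: "1 \<le> m" "m < n" and v: "v \<notin> F (m - 1)"
  shows "\<exists>W. full_flag n (F(m := W)) \<and> v \<notin> W"
proof (cases "v \<in> F (Suc m)")
  case True
  have le: "m - 1 \<le> n" "Suc m \<le> n" "m - 1 \<le> Suc m"
    using m by auto
  obtain W where W: "cs.subspace W" "F (m - 1) \<subseteq> W" "W \<subseteq> F (Suc m)" "v \<notin> W"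
      "cs.dim W + 1 = cs.dim (F (Suc m))"
    using cs.exists_hyperplane_avoiding[of "F (m - 1)" "F (Suc m)" v "unit_vec ` {..<n}"]
      full_flagD[OF F] full_flag_mono[OF F le(3,2)] ambient_subset_span_unit_vec le True v
    by (meson finite_imageI finite_lessThan order_trans)
  have "subsp_dim n W m"
    using W full_flagD[OF F le(2)] by (auto simp: subsp_dim_def)
  then show ?thesis
    using full_flag_fun_upd[OF F m] W by blast
next
  case False
  have "F (m := F m) = F" "v \<notin> F m"
    using False full_flag_mono[OF F, of m "Suc m"] m by auto
  then show ?thesis
    using F by metis
qed

lemma full_flag_avoid_between:
  assumes F: "full_flag n F" and "a < b" "b \<le> n" and v: "v \<notin> F a"
  shows "\<exists>F'. full_flag n F' \<and> (\<forall>j. j \<notin> {a<..<b} \<longrightarrow> F' j = F j) \<and> v \<notin> F' (b - 1)"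
proof -
  have "Suc a \<le> b"
    using \<open>a < b\<close> by simp
  then show ?thesis
    using \<open>b \<le> n\<close>
  proof (induction b rule: dec_induct)
    case base
    show ?case
      using F v by auto
  next
    case (step m)
    then obtain F' where F': "full_flag n F'" "\<forall>j. j \<notin> {a<..<m} \<longrightarrow> F' j = F j"
        "v \<notin> F' (m - 1)"
      by auto
    have "1 \<le> m" "m < n"
      using step by auto
    then obtain W where W: "full_flag n (F'(m := W))" "v \<notin> W"
      using full_flag_avoid_at[OF F'(1) _ _ F'(3)] by blast
    have "\<forall>j. j \<notin> {a<..<Suc m} \<longrightarrow> (F'(m := W)) j = F j"
      using F'(2) step(1) by auto
    then show ?case
      using W by force
  qed
qed

lemma subspace_of_type_memI:
  assumes "subspace_of_type n I U" "F \<in> U" "full_flag n F'" "\<forall>j. j \<notin> I \<longrightarrow> F' j = F j"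
  shows "F' \<in> U"
  using assms unfolding subspace_of_type_def by auto

lemma nilN_image_subset_if_between_type:
  assumes U: "subspace_of_type n I U" "U \<subseteq> springer_fibre n k" and "F \<in> U"
    and "a < b" "b \<le> n" "{a<..<b} \<subseteq> I"
  shows "nilN n k ` F b \<subseteq> F a"
proof
  fix v assume v: "v \<in> nilN n k ` F b"
  show "v \<in> F a"
  proof (rule ccontr)
    assume "v \<notin> F a"
    moreover have "full_flag n F"
      using \<open>F \<in> U\<close> U(2) by (auto simp: springer_fibre_def)
    ultimately obtain F' where F': "full_flag n F'" "\<forall>j. j \<notin> {a<..<b} \<longrightarrow> F' j = F j"
        "v \<notin> F' (b - 1)"
      using full_flag_avoid_between \<open>a < b\<close> \<open>b \<le> n\<close> by blast
    have "F' \<in> U"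
      using subspace_of_type_memI[OF U(1) \<open>F \<in> U\<close> F'(1)] F'(2) \<open>{a<..<b} \<subseteq> I\<close> by blast
    moreover have "b \<in> {1..n}"
      using \<open>a < b\<close> \<open>b \<le> n\<close> by auto
    ultimately have "nilN n k ` F' b \<subseteq> F' (b - 1)"
      using U(2) unfolding springer_fibre_def by blast
    then show False
      using v F'(2,3) by auto
  qed
qed

lemma springer_type_no_consecutive:
  assumes U: "subspace_of_type n I U" "U \<subseteq> springer_fibre n k"
    and "2 * k \<le> n" "I \<subseteq> {1..n - 1}" "i \<in> I" "Suc i \<in> I"
  shows False
proof -
  obtain F where "F \<in> U"
    using U(1) by (auto simp: subspace_of_type_def)
  then have F: "full_flag n F"
    using U(2) by (auto simp: springer_fibre_def)
  have i: "1 \<le> i" "i + 2 \<le> n" "k < n"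
    using assms(3-6) by auto
  have "{i - 1<..<i + 2} = {i, Suc i}"
    using i by auto
  then have "{i - 1<..<i + 2} \<subseteq> I"
    using assms(5,6) by simp
  then have "nilN n k ` F (i + 2) \<subseteq> F (i - 1)"
    using nilN_image_subset_if_between_type[OF U \<open>F \<in> U\<close>] i by simp
  moreover have "F (i - 1) \<subseteq> cs.span (unit_vec ` {..<n})"
    using full_flagD(2)[OF F, of "i - 1"] ambient_subset_span_unit_vec[of n] i by force
  ultimately have "cs.dim (nilN n k ` F (i + 2)) \<le> cs.dim (F (i - 1))"
    by (intro cs.dim_subset_of_span_finite) auto
  also have "\<dots> = i - 1"
    using full_flagD(3)[OF F, of "i - 1"] i by simp
  finally have "cs.dim (nilN n k ` F (i + 2)) \<le> i - 1" .
  moreover have "i + 2 \<le> cs.dim (nilN n k ` F (i + 2)) + 2"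
    using dim_le_dim_nilN_image_add_2[of "F (i + 2)" n k] full_flagD[OF F, of "i + 2"] i by simp
  ultimately show False
    using i by linarith
qed

lemma springer_type_nilN_image_prev:
  assumes U: "subspace_of_type n I U" "U \<subseteq> springer_fibre n k"
    and "F \<in> U" "j \<in> {1..n} - I"
  shows "if {j'\<in>{1..n} - I. j' < j} = {}
         then nilN n k ` F j \<subseteq> {0}
         else nilN n k ` F j \<subseteq> F (Max {j'\<in>{1..n} - I. j' < j})"
proof -
  define P where "P = {j'\<in>{1..n} - I. j' < j}"
  have j: "0 < j" "j \<le> n"
    using assms(4) by auto
  have between: "{a<..<j} \<subseteq> I" if "\<forall>j'\<in>P. j' \<le> a" for a
  proof
    fix x assume x: "x \<in> {a<..<j}"
    show "x \<in> I"
    proof (rule ccontr)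
      assume "x \<notin> I"
      then have "x \<in> P"
        using x j unfolding P_def by auto
      then show False
        using that x by auto
    qed
  qed
  have "if P = {} then nilN n k ` F j \<subseteq> {0} else nilN n k ` F j \<subseteq> F (Max P)"
  proof (cases "P = {}")
    case True
    have "F 0 = {0}"
      using \<open>F \<in> U\<close> U(2) by (auto simp: springer_fibre_def full_flag_def)
    moreover have "nilN n k ` F j \<subseteq> F 0"
      using nilN_image_subset_if_between_type[OF U \<open>F \<in> U\<close> j(1,2) between] True by blast
    ultimately show ?thesis
      using True by simp
  next
    case False
    have "finite P"
      unfolding P_def by auto
    then have "Max P \<in> P" "\<forall>j'\<in>P. j' \<le> Max P"
      using False by auto
    then have "nilN n k ` F j \<subseteq> F (Max P)"
      using nilN_image_subset_if_between_type[OF U \<open>F \<in> U\<close> _ j(2) between] P_def by auto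
    then show ?thesis
      using False by simp
  qed
  then show ?thesis
    unfolding P_def .
qed

theorem lemma3p7:
  fixes n k :: nat and I :: "nat set" and U :: "(nat \<Rightarrow> vect set) set"
  assumes "2 * k \<le> n"
    and "I \<subseteq> {1..n - 1}"
    and "subspace_of_type n I U"
    and "U \<subseteq> springer_fibre n k"
  shows "(\<forall>F\<in>U. \<forall>j\<in>{1..n} - I.
            (if {j'\<in>{1..n} - I. j' < j} = {}
             then nilN n k ` F j \<subseteq> {0}
             else nilN n k ` F j \<subseteq> F (Max {j'\<in>{1..n} - I. j' < j})))
       \<and> (\<forall>i\<in>I. Suc i \<notin> I)"
  using springer_type_nilN_image_prev[OF assms(3,4)]
    springer_type_no_consecutive[OF assms(3,4,1,2)] by blast

end
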